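(* Let $(X_n)_{n\in\mathbb{N}}$ be i.i.d. real random variables with distribution function $F$ and survival function $\bar F(x)=\mathbb{P}(X_1>x)$, with $\bar F(x)=x^{-\alpha}L(x)$ for all $x>x_0$, where $x_0>0$, $\alpha>0$ and $L$ is slowly varying, and assume $X_1$ has a density $f$ that is non-increasing on $[x_1,\infty)$ for some $x_1$. Let $a_n=F^{\leftarrow}(1-1/n)$ and, for $n\ge2$ and $x>0$, $t_n(x)=a_n x^{\log n/\alpha}$ and \[ g_n(x)=n\,a_n\,\frac{\alpha}{\log n}\,x^{\frac{\log n}{\alpha}-1}\,F^{n-1}(t_n(x))\,f(t_n(x)), \] which is the density on $(0,\infty)$ of $Z_n=(X_{(n)}/a_n)^{\alpha/\log n}$, $X_{(n)}=\max_{1\le i\le n}X_i$. Then for every fixed $M>1$, \[ \lim_{n\to\infty}\frac{1}{\log n}\log g_n(x)=-\log x \] uniformly in $x\in[1,M]$.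
   Context: A function $L:(0,\infty)\to(0,\infty)$ is slowly varying if $\lim_{x\to\infty}L(tx)/L(x)=1$ for all $t>0$. $F^{\leftarrow}(u)=\inf\{x\in\mathbb{R}: F(x)\ge u\}$ denotes the left-inverse of $F$. *)

theory Defs
  imports "HOL-Probability.Probability"
begin

definition slowly_varying :: "(real \<Rightarrow> real) \<Rightarrow> bool" where
  "slowly_varying L \<longleftrightarrow> (\<forall>x>0. L x > 0) \<and>
     (\<forall>t>0. ((\<lambda>x. L (t * x) / L x) \<longlongrightarrow> 1) at_top)"

definition left_inv :: "(real \<Rightarrow> real) \<Rightarrow> real \<Rightarrow> real" where
  "left_inv F u = Inf {x. F x \<ge> u}"

definition a_seq :: "(real \<Rightarrow> real) \<Rightarrow> nat \<Rightarrow> real" where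
  "a_seq F n = left_inv F (1 - 1 / real n)"

definition t_seq :: "(real \<Rightarrow> real) \<Rightarrow> real \<Rightarrow> nat \<Rightarrow> real \<Rightarrow> real" where
  "t_seq F \<alpha> n x = a_seq F n * x powr (ln (real n) / \<alpha>)"

definition g_seq :: "(real \<Rightarrow> real) \<Rightarrow> (real \<Rightarrow> real) \<Rightarrow> real \<Rightarrow> nat \<Rightarrow> real \<Rightarrow> real" where
  "g_seq F f \<alpha> n x = real n * a_seq F n * (\<alpha> / ln (real n)) * x powr (ln (real n) / \<alpha> - 1)
      * (F (t_seq F \<alpha> n x)) ^ (n - 1) * f (t_seq F \<alpha> n x)"

end

(*
  Write S = 1 - F for the tail. Since S is monotone and S(2t)/S(t) tends to 2^(-alpha), the
  function ln S(t) + alpha ln t changes by o(1) under doubling and is bounded on [T, 2T], hence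
  is o(ln t): ln S(t) / ln t tends to -alpha. As f is eventually non-increasing, t f(t) lies
  between S(t) - S(2t) and 2 S(t/2), so ln (t f(t)) / ln t tends to -alpha as well; and
  S(a_n) <= 1/n <= S(a_n/2) gives ln a_n / ln n -> 1/alpha.
  For t = t_n(x) >= a_n we have ln t = ln a_n + (ln n / alpha) ln x and
  (1 - 1/n)^(n-1) <= F(t)^(n-1) <= 1, so with y = ln x in [0, ln M]
    ln g_n(x) / ln n = 1 + ln a_n / ln n + y / alpha
                       + (ln (t f(t)) / ln t - 1) (ln a_n / ln n + y / alpha) + o(1)
  uniformly in x, and the right-hand side tends to 1 + (1 + y)/alpha - (alpha + 1)(1 + y)/alpha = -y.
*)
theory Submission
  imports Defs "HOL-Real_Asymp.Real_Asymp"
begin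

lemma tendsto_div_ln_of_doubling:
  fixes \<psi> :: "real \<Rightarrow> real"
  assumes doubling: "((\<lambda>t. \<psi> (2 * t) - \<psi> t) \<longlongrightarrow> 0) at_top"
    and locally_bounded: "\<forall>\<^sub>F T in at_top. \<exists>B. \<forall>t\<in>{T..2 * T}. \<bar>\<psi> t\<bar> \<le> B"
  shows "((\<lambda>t. \<psi> t / ln t) \<longlongrightarrow> 0) at_top"
proof (rule tendstoI)
  fix \<epsilon> :: real assume "\<epsilon> > 0"
  define \<delta> where "\<delta> = \<epsilon> * ln 2 / 2"
  have "\<delta> > 0" using \<open>\<epsilon> > 0\<close> by (simp add: \<delta>_def)
  have "\<forall>\<^sub>F t in at_top. \<bar>\<psi> (2 * t) - \<psi> t\<bar> \<le> \<delta>"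
    using tendstoD[OF doubling \<open>\<delta> > 0\<close>] by (auto elim: eventually_mono)
  then have "\<forall>\<^sub>F T in at_top. \<forall>t\<ge>T. \<bar>\<psi> (2 * t) - \<psi> t\<bar> \<le> \<delta>"
    by (rule eventually_all_ge_at_top)
  from eventually_conj[OF eventually_conj[OF eventually_ge_at_top[of 1] this] locally_bounded]
  obtain T B where "T \<ge> 1" and step: "\<And>t. t \<ge> T \<Longrightarrow> \<bar>\<psi> (2 * t) - \<psi> t\<bar> \<le> \<delta>"
    and B: "\<And>t. t \<in> {T..2 * T} \<Longrightarrow> \<bar>\<psi> t\<bar> \<le> B"
    unfolding eventually_at_top_linorder by (meson order_refl)
  have telescope: "\<bar>\<psi> (2 ^ k * s) - \<psi> s\<bar> \<le> k * \<delta>" if "s \<ge> T" for s k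
  proof (induction k)
    case (Suc k)
    have "s \<le> 2 ^ k * s" using \<open>s \<ge> T\<close> \<open>T \<ge> 1\<close> by simp
    then have "2 ^ k * s \<ge> T" using \<open>s \<ge> T\<close> by linarith
    then have "\<bar>\<psi> (2 * (2 ^ k * s)) - \<psi> (2 ^ k * s)\<bar> \<le> \<delta>" by (rule step)
    with Suc.IH show ?case by (simp add: algebra_simps)
  qed simp
  have bound: "\<bar>\<psi> t\<bar> \<le> B + (\<epsilon> / 2) * ln t" if "t \<ge> T" for t
  proof -
    define k where "k = nat \<lfloor>log 2 (t / T)\<rfloor>"
    have "log 2 (t / T) \<ge> 0" using that \<open>T \<ge> 1\<close> by simp
    then have "real k = \<lfloor>log 2 (t / T)\<rfloor>" by (simp add: k_def)
    then have "2 powr k \<le> t / T \<and> t / T < 2 powr (k + 1)"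
      using floor_log_eq_powr_iff[of "t / T" 2 "\<lfloor>log 2 (t / T)\<rfloor>"] that \<open>T \<ge> 1\<close>
      by (simp add: add.commute)
    then have s: "t / 2 ^ k \<in> {T..2 * T}"
      using \<open>T \<ge> 1\<close> by (simp add: powr_realpow powr_add field_simps)
    have "k \<le> log 2 (t / T)" using \<open>log 2 (t / T) \<ge> 0\<close> by (simp add: k_def)
    also have "\<dots> \<le> ln t / ln 2"
      unfolding log_def using that \<open>T \<ge> 1\<close> by (intro divide_right_mono) (auto simp: ln_div)
    finally have "k * ln 2 \<le> ln t" by (simp add: field_simps)
    then have "k * \<delta> \<le> (\<epsilon> / 2) * ln t"
      using \<open>\<epsilon> > 0\<close> mult_left_mono[of "k * ln 2" "ln t" "\<epsilon> / 2"] by (simp add: \<delta>_def)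
    moreover have "\<bar>\<psi> (2 ^ k * (t / 2 ^ k)) - \<psi> (t / 2 ^ k)\<bar> \<le> k * \<delta>"
      using telescope[of "t / 2 ^ k" k] s by simp
    ultimately show ?thesis using B[OF s] by simp
  qed
  have "\<forall>\<^sub>F t in at_top. ln t > 2 * \<bar>B\<bar> / \<epsilon>"
    using filterlim_at_top_dense ln_at_top by blast
  with eventually_ge_at_top[of T] show "\<forall>\<^sub>F t in at_top. dist (\<psi> t / ln t) 0 < \<epsilon>"
  proof eventually_elim
    case (elim t)
    have "0 \<le> 2 * \<bar>B\<bar> / \<epsilon>" using \<open>\<epsilon> > 0\<close> by simp
    then have "ln t > 0" using elim(2) by linarith
    have "\<bar>\<psi> t\<bar> < \<epsilon> * ln t" using bound[OF elim(1)] elim(2) \<open>\<epsilon> > 0\<close> by (simp add: field_simps)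
    then show ?case using \<open>ln t > 0\<close> by (simp add: abs_divide field_simps)
  qed
qed

lemma tendsto_ln_div_ln_of_doubling_ratio:
  fixes S :: "real \<Rightarrow> real"
  assumes "antimono S" and pos: "\<forall>\<^sub>F t in at_top. S t > 0"
    and ratio: "((\<lambda>t. S (2 * t) / S t) \<longlongrightarrow> 2 powr - \<alpha>) at_top"
  shows "((\<lambda>t. ln (S t) / ln t) \<longlongrightarrow> - \<alpha>) at_top"
proof -
  define \<psi> where "\<psi> t = ln (S t) + \<alpha> * ln t" for t
  obtain z where z: "\<And>t. t \<ge> z \<Longrightarrow> S t > 0" using pos by (auto simp: eventually_at_top_linorder)
  have "((\<lambda>t. ln (S (2 * t) / S t) + \<alpha> * ln 2) \<longlongrightarrow> ln (2 powr - \<alpha>) + \<alpha> * ln 2) at_top"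
    by (intro tendsto_intros ratio) simp
  moreover have "\<forall>\<^sub>F t in at_top. ln (S (2 * t) / S t) + \<alpha> * ln 2 = \<psi> (2 * t) - \<psi> t"
    using eventually_ge_at_top[of "max z 1"]
  proof eventually_elim
    case (elim t)
    then have "S t > 0" "S (2 * t) > 0" using z by auto
    with elim show ?case by (simp add: \<psi>_def ln_div ln_mult algebra_simps)
  qed
  ultimately have "((\<lambda>t. \<psi> (2 * t) - \<psi> t) \<longlongrightarrow> 0) at_top"
    by (simp add: tendsto_cong)
  moreover have "\<forall>\<^sub>F T in at_top. \<exists>B. \<forall>t\<in>{T..2 * T}. \<bar>\<psi> t\<bar> \<le> B"
    using eventually_ge_at_top[of "max z 1"]
  proof eventually_elim
    case (elim T)
    have "\<bar>\<psi> t\<bar> \<le> \<bar>ln (S T)\<bar> + \<bar>ln (S (2 * T))\<bar> + \<bar>\<alpha>\<bar> * ln (2 * T)" if "t \<in> {T..2 * T}" for t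
    proof -
      have "S (2 * T) \<le> S t" "S t \<le> S T" using \<open>antimono S\<close> that by (auto dest: antimonoD)
      then have "ln (S (2 * T)) \<le> ln (S t)" "ln (S t) \<le> ln (S T)" using z elim that by auto
      moreover have "0 \<le> ln t" "ln t \<le> ln (2 * T)" using elim that by auto
      moreover have "\<bar>\<alpha> * ln t\<bar> \<le> \<bar>\<alpha>\<bar> * ln (2 * T)"
        using calculation(3,4) by (simp add: abs_mult mult_left_mono)
      ultimately show ?thesis unfolding \<psi>_def by linarith
    qed
    then show ?case by blast
  qed
  ultimately have "((\<lambda>t. \<psi> t / ln t - \<alpha>) \<longlongrightarrow> 0 - \<alpha>) at_top"
    by (intro tendsto_intros tendsto_div_ln_of_doubling)
  moreover have "\<forall>\<^sub>F t in at_top. \<psi> t / ln t - \<alpha> = ln (S t) / ln t"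
    using eventually_gt_at_top[of 1] by eventually_elim (simp add: \<psi>_def field_simps)
  ultimately show ?thesis by (simp add: tendsto_cong)
qed

lemma tendsto_ratio_of_slowly_varying:
  fixes S L :: "real \<Rightarrow> real"
  assumes "slowly_varying L" and "c > 0" and S: "\<And>t. t > x0 \<Longrightarrow> S t = t powr - \<alpha> * L t"
  shows "((\<lambda>t. S (c * t) / S t) \<longlongrightarrow> c powr - \<alpha>) at_top"
proof -
  have "((\<lambda>t. c powr - \<alpha> * (L (c * t) / L t)) \<longlongrightarrow> c powr - \<alpha> * 1) at_top"
    using assms(1,2) unfolding slowly_varying_def by (intro tendsto_intros) auto
  moreover have "\<forall>\<^sub>F t in at_top. c powr - \<alpha> * (L (c * t) / L t) = S (c * t) / S t"
    using eventually_gt_at_top[of "max 0 (max x0 (x0 / c))"]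
  proof eventually_elim
    case (elim t)
    then have "t > x0" "c * t > x0" "L t > 0" using assms(1,2)
      by (auto simp: field_simps slowly_varying_def)
    with elim show ?case by (simp add: S powr_mult)
  qed
  ultimately show ?thesis by (simp add: tendsto_cong)
qed

lemma tendsto_ln_tail_difference_div_ln:
  fixes S :: "real \<Rightarrow> real"
  assumes "antimono S" and pos: "\<forall>\<^sub>F t in at_top. S t > 0"
    and ratio: "((\<lambda>t. S (2 * t) / S t) \<longlongrightarrow> 2 powr - \<alpha>) at_top" and "\<alpha> > 0"
  shows "\<forall>\<^sub>F t in at_top. S (2 * t) < S t"
    and "((\<lambda>t. ln (S t - S (2 * t)) / ln t) \<longlongrightarrow> - \<alpha>) at_top"
proof -
  have "2 powr - \<alpha> < 1" using \<open>\<alpha> > 0\<close> by (intro powr_less_one) auto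
  then have "((\<lambda>t. ln (1 - S (2 * t) / S t)) \<longlongrightarrow> ln (1 - 2 powr - \<alpha>)) at_top"
    using \<open>\<alpha> > 0\<close> by (intro tendsto_intros ratio) simp
  then have "((\<lambda>t. ln (S t) / ln t + ln (1 - S (2 * t) / S t) / ln t) \<longlongrightarrow> - \<alpha> + 0) at_top"
    by (intro tendsto_intros tendsto_ln_div_ln_of_doubling_ratio[OF \<open>antimono S\<close> pos ratio]
        tendsto_divide_0[OF _ filterlim_at_top_imp_at_infinity[OF ln_at_top]])
  moreover have ratio_less: "\<forall>\<^sub>F t in at_top. S (2 * t) / S t < 1"
    using order_tendstoD(2)[OF ratio \<open>2 powr - \<alpha> < 1\<close>] .
  have "\<forall>\<^sub>F t in at_top. ln (S t) / ln t + ln (1 - S (2 * t) / S t) / ln t = ln (S t - S (2 * t)) / ln t"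
    using pos ratio_less
  proof eventually_elim
    case (elim t)
    then have "S t - S (2 * t) = S t * (1 - S (2 * t) / S t)" by (simp add: field_simps)
    with elim show ?case by (simp add: ln_mult add_divide_distrib)
  qed
  ultimately show "((\<lambda>t. ln (S t - S (2 * t)) / ln t) \<longlongrightarrow> - \<alpha>) at_top"
    by (simp add: tendsto_cong)
  show "\<forall>\<^sub>F t in at_top. S (2 * t) < S t"
    using pos ratio_less by eventually_elim (simp add: field_simps)
qed

lemma tendsto_ln_density_div_ln:
  fixes S f :: "real \<Rightarrow> real"
  assumes "antimono S" and pos: "\<forall>\<^sub>F t in at_top. S t > 0"
    and ratio: "((\<lambda>t. S (2 * t) / S t) \<longlongrightarrow> 2 powr - \<alpha>) at_top" and "\<alpha> > 0"
    and increment: "\<And>a b. x1 \<le> a \<Longrightarrow> a \<le> b \<Longrightarrow> (b - a) * f b \<le> S a - S b \<and> S a - S b \<le> (b - a) * f a"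
  shows "((\<lambda>t. ln (t * f t) / ln t) \<longlongrightarrow> - \<alpha>) at_top"
proof (rule tendsto_sandwich)
  note difference = tendsto_ln_tail_difference_div_ln[OF \<open>antimono S\<close> pos ratio \<open>\<alpha> > 0\<close>]
  show "((\<lambda>t. ln (S t - S (2 * t)) / ln t) \<longlongrightarrow> - \<alpha>) at_top" by (fact difference(2))
  have "filterlim (\<lambda>t::real. t / 2) at_top at_top" by real_asymp
  with tendsto_ln_div_ln_of_doubling_ratio[OF \<open>antimono S\<close> pos ratio]
  have "((\<lambda>t. ln (S (t / 2)) / ln (t / 2)) \<longlongrightarrow> - \<alpha>) at_top"
    by (rule filterlim_compose)
  moreover have "((\<lambda>t::real. ln (t / 2) / ln t) \<longlongrightarrow> 1) at_top" by real_asymp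
  moreover have "((\<lambda>t::real. ln 2 / ln t) \<longlongrightarrow> 0) at_top" by real_asymp
  ultimately have "((\<lambda>t. ln 2 / ln t + ln (S (t / 2)) / ln (t / 2) * (ln (t / 2) / ln t))
      \<longlongrightarrow> 0 + - \<alpha> * 1) at_top"
    by (intro tendsto_intros)
  then show "((\<lambda>t. ln 2 / ln t + ln (S (t / 2)) / ln (t / 2) * (ln (t / 2) / ln t)) \<longlongrightarrow> - \<alpha>) at_top"
    by simp
  obtain z where z: "\<And>t. t \<ge> z \<Longrightarrow> S t > 0" using pos by (auto simp: eventually_at_top_linorder)
  have "\<forall>\<^sub>F t in at_top. ln (S t - S (2 * t)) / ln t \<le> ln (t * f t) / ln t
      \<and> ln (t * f t) / ln t \<le> ln 2 / ln t + ln (S (t / 2)) / ln (t / 2) * (ln (t / 2) / ln t)"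
    using difference(1) eventually_ge_at_top[of "max (2 * z) (max (2 * x1) 3)"]
  proof eventually_elim
    case (elim t)
    then have "t > 2" "x1 \<le> t / 2" "S (t / 2) > 0" using z by auto
    have "S t - S (2 * t) \<le> t * f t" "t * f t \<le> 2 * S (t / 2)"
      using increment[of t "2 * t"] increment[of "t / 2" t] z[of t] \<open>t > 2\<close> \<open>x1 \<le> t / 2\<close> elim(2)
      by (auto simp: field_simps)
    then have "ln (S t - S (2 * t)) \<le> ln (t * f t)" "ln (t * f t) \<le> ln (2 * S (t / 2))"
      using elim(1) by auto
    then have "ln (S t - S (2 * t)) \<le> ln (t * f t)" "ln (t * f t) \<le> ln 2 + ln (S (t / 2))"
      using \<open>S (t / 2) > 0\<close> by (simp_all add: ln_mult)
    moreover have "ln t > 0" "ln (t / 2) > 0" using \<open>t > 2\<close> by auto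
    ultimately show ?case
      by (auto simp: add_divide_distrib[symmetric] intro: divide_right_mono)
  qed
  then show "\<forall>\<^sub>F t in at_top. ln (S t - S (2 * t)) / ln t \<le> ln (t * f t) / ln t"
    and "\<forall>\<^sub>F t in at_top. ln (t * f t) / ln t \<le> ln 2 / ln t + ln (S (t / 2)) / ln (t / 2) * (ln (t / 2) / ln t)"
    by (auto elim: eventually_mono)
qed

lemma tendsto_ln_quantile_div_ln:
  fixes S :: "real \<Rightarrow> real" and a :: "nat \<Rightarrow> real"
  assumes lnS: "((\<lambda>t. ln (S t) / ln t) \<longlongrightarrow> - \<alpha>) at_top" and "\<alpha> > 0"
    and a_top: "filterlim a at_top sequentially" and pos: "\<forall>\<^sub>F t in at_top. S t > 0"
    and quantile: "\<forall>\<^sub>F n in sequentially. S (a n) \<le> 1 / n \<and> 1 / n \<le> S (a n / 2)"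
  shows "((\<lambda>n. ln (a n) / ln n) \<longlongrightarrow> 1 / \<alpha>) sequentially"
proof -
  have half_top: "filterlim (\<lambda>n. a n / 2) at_top sequentially"
    by (rule filterlim_compose[OF _ a_top]) real_asymp
  have "((\<lambda>n. ln (S (a n / 2)) / ln (a n / 2) * (ln (a n / 2) / ln (a n))) \<longlongrightarrow> - \<alpha> * 1) sequentially"
  proof (intro tendsto_mult filterlim_compose[OF lnS half_top])
    show "((\<lambda>n. ln (a n / 2) / ln (a n)) \<longlongrightarrow> 1) sequentially"
      by (rule filterlim_compose[OF _ a_top]) real_asymp
  qed
  then have lower: "((\<lambda>n. - (ln (S (a n / 2)) / ln (a n / 2) * (ln (a n / 2) / ln (a n)))) \<longlongrightarrow> \<alpha>) sequentially"
    by (auto intro: tendsto_eq_intros)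
  have upper: "((\<lambda>n. - (ln (S (a n)) / ln (a n))) \<longlongrightarrow> \<alpha>) sequentially"
    using tendsto_minus[OF filterlim_compose[OF lnS a_top]] by simp
  obtain z where z: "\<And>t. t \<ge> z \<Longrightarrow> S t > 0" using pos by (auto simp: eventually_at_top_linorder)
  have "\<forall>\<^sub>F n in sequentially. a n \<ge> max (2 * z) 4"
    using a_top unfolding filterlim_at_top by blast
  with quantile eventually_ge_at_top[of 1]
  have "\<forall>\<^sub>F n in sequentially. - (ln (S (a n / 2)) / ln (a n / 2) * (ln (a n / 2) / ln (a n)))
      \<le> ln n / ln (a n) \<and> ln n / ln (a n) \<le> - (ln (S (a n)) / ln (a n))"
  proof eventually_elim
    case (elim n)
    then have "S (a n) > 0" "S (a n / 2) > 0" "ln (a n / 2) > 0" "ln (a n) > 0" "n > 0"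
      using z by auto
    then have "ln (S (a n)) \<le> ln (1 / n)" "ln (1 / n) \<le> ln (S (a n / 2))"
      using elim(1) by auto
    moreover have "ln (1 / n) = - ln n" using \<open>n > 0\<close> by (simp add: ln_div)
    ultimately have "ln (S (a n)) \<le> - ln n" "- ln n \<le> ln (S (a n / 2))" by auto
    with \<open>ln (a n / 2) > 0\<close> \<open>ln (a n) > 0\<close> show ?case
      by (simp_all add: field_simps)
  qed
  then have "((\<lambda>n. ln n / ln (a n)) \<longlongrightarrow> \<alpha>) sequentially"
    by (intro tendsto_sandwich[OF _ _ lower upper]) (auto elim: eventually_mono)
  from tendsto_inverse[OF this] show ?thesis
    using \<open>\<alpha> > 0\<close> by (simp add: inverse_eq_divide)
qed

lemma abs_ln_power_pred_le_one:
  fixes p :: real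
  assumes "n \<ge> 2" and "1 - 1 / n \<le> p" and "p \<le> 1"
  shows "\<bar>ln (p ^ (n - 1))\<bar> \<le> 1"
proof -
  define m where "m = real n - 1"
  have "m \<ge> 1" "real (n - 1) = m" using assms(1) by (auto simp: m_def of_nat_diff)
  have "1 / real n \<le> 1 / 2" using assms(1) by (simp add: divide_simps)
  then have "p > 0" using assms(2) by linarith
  have "ln (1 + 1 / m) \<le> 1 / m" using \<open>m \<ge> 1\<close> by (intro ln_add_one_self_le_self) auto
  moreover have "1 - 1 / n = inverse (1 + 1 / m)"
    using \<open>m \<ge> 1\<close> by (simp add: m_def field_simps)
  then have "ln (1 - 1 / n) = - ln (1 + 1 / m)"
    using \<open>m \<ge> 1\<close> by (simp add: ln_inverse)
  moreover have "ln (1 - 1 / n) \<le> ln p"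
    using assms(2) \<open>1 / real n \<le> 1 / 2\<close> by (subst ln_le_cancel_iff) auto
  ultimately have "- (1 / m) \<le> ln p" by linarith
  then have "- 1 \<le> m * ln p"
    using \<open>m \<ge> 1\<close> mult_left_mono[of "- (1 / m)" "ln p" m] by simp
  moreover have "m * ln p \<le> 0"
    using \<open>m \<ge> 1\<close> \<open>p > 0\<close> assms(3) by (simp add: mult_nonneg_nonpos)
  ultimately show ?thesis using \<open>p > 0\<close> \<open>real (n - 1) = m\<close> by (simp add: ln_realpow)
qed

lemma tendsto_imp_uniform_limit:
  assumes "(g \<longlongrightarrow> c) F"
  shows "uniform_limit A (\<lambda>n _. g n) (\<lambda>_. c) F"
  using assms by (auto intro!: uniform_limitI dest: tendstoD)

lemma uniform_limit_compose_at_top: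
  fixes h :: "real \<Rightarrow> 'b::metric_space"
  assumes "(h \<longlongrightarrow> c) at_top" and "filterlim a at_top F" and "\<forall>\<^sub>F n in F. \<forall>x\<in>A. a n \<le> t n x"
  shows "uniform_limit A (\<lambda>n x. h (t n x)) (\<lambda>_. c) F"
proof (rule uniform_limitI)
  fix e :: real assume "e > 0"
  then obtain T where T: "\<And>s. s \<ge> T \<Longrightarrow> dist (h s) c < e"
    using tendstoD[OF assms(1)] by (auto simp: eventually_at_top_linorder)
  from assms(2) have "\<forall>\<^sub>F n in F. a n \<ge> T" by (simp add: filterlim_at_top)
  with assms(3) show "\<forall>\<^sub>F n in F. \<forall>x\<in>A. dist (h (t n x)) c < e"
    by eventually_elim (auto intro: T order_trans)
qed

lemma uniform_limit_ln_power_pred_div_ln: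
  fixes p :: "nat \<Rightarrow> 'a \<Rightarrow> real"
  assumes "\<forall>\<^sub>F n in sequentially. \<forall>x\<in>A. 1 - 1 / n \<le> p n x \<and> p n x \<le> 1"
  shows "uniform_limit A (\<lambda>n x. ln (p n x ^ (n - 1)) / ln n) (\<lambda>_. 0) sequentially"
proof (rule uniform_limit_null_comparison)
  show "\<forall>\<^sub>F n in sequentially. \<forall>x\<in>A. norm (ln (p n x ^ (n - 1)) / ln n) \<le> 1 / ln n"
    using assms eventually_ge_at_top[of 2]
  proof eventually_elim
    case (elim n)
    have "\<bar>ln (p n x ^ (n - 1))\<bar> \<le> 1" if "x \<in> A" for x
      using elim that by (intro abs_ln_power_pred_le_one) auto
    moreover have "ln n > 0" using elim(2) by simp
    ultimately show ?case by (simp add: abs_divide divide_right_mono)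
  qed
  have "((\<lambda>n::nat. 1 / ln n) \<longlongrightarrow> 0) sequentially" by real_asymp
  then show "uniform_limit A (\<lambda>n _. 1 / ln n) (\<lambda>_. 0) sequentially"
    by (rule tendsto_imp_uniform_limit)
qed

lemma a_seq_le_t_seq:
  assumes "0 \<le> a_seq F n" and "\<alpha> > 0" and "1 \<le> x"
  shows "a_seq F n \<le> t_seq F \<alpha> n x"
proof -
  have "ln (real n) \<ge> 0" by (cases "n = 0") auto
  then have "a_seq F n * 1 \<le> a_seq F n * x powr (ln n / \<alpha>)"
    using assms by (intro mult_left_mono ge_one_powr_ge_zero) auto
  then show ?thesis by (simp add: t_seq_def)
qed

lemma ln_g_seq_div_ln:
  fixes F f :: "real \<Rightarrow> real" and \<alpha> x :: real and n :: nat
  defines "t \<equiv> t_seq F \<alpha> n x"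
  assumes "\<alpha> > 0" and "n \<ge> 2" and "a_seq F n > 1" and "1 \<le> x" and "F t > 0" and "f t > 0"
  shows "ln (g_seq F f \<alpha> n x) / ln n = 1 + ln (a_seq F n) / ln n + (ln \<alpha> - ln (ln n)) / ln n
    + ln x * (1 / \<alpha> - 1 / ln n) + ln (F t ^ (n - 1)) / ln n
    + (ln (t * f t) / ln t - 1) * (ln (a_seq F n) / ln n + ln x / \<alpha>)"
proof -
  define l a where "l = ln (real n)" and "a = a_seq F n"
  have "l > 0" using assms by (simp add: l_def)
  have "a \<le> t" using assms a_seq_le_t_seq[of F n \<alpha> x] by (simp add: a_def)
  then have "t > 1" using assms by (simp add: a_def)
  have ln_t: "ln t = ln a + l / \<alpha> * ln x"
    using assms by (simp add: t_def t_seq_def ln_mult ln_powr flip: a_def l_def)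
  have ln_f: "ln (f t) = (ln (t * f t) / ln t - 1) * ln t"
    using \<open>t > 1\<close> \<open>f t > 0\<close> by (simp add: ln_mult field_simps)
  have "ln (g_seq F f \<alpha> n x)
      = l + ln a + (ln \<alpha> - ln l) + (l / \<alpha> - 1) * ln x + ln (F t ^ (n - 1)) + ln (f t)"
    using assms \<open>l > 0\<close> by (simp add: g_seq_def ln_mult ln_div ln_powr flip: a_def l_def t_def)
  also have "\<dots> = l + ln a + (ln \<alpha> - ln l) + (l / \<alpha> - 1) * ln x + ln (F t ^ (n - 1))
      + (ln (t * f t) / ln t - 1) * (ln a + l / \<alpha> * ln x)"
    by (simp only: ln_f ln_t)
  finally have ln_g: "ln (g_seq F f \<alpha> n x) = l + ln a + (ln \<alpha> - ln l) + (l / \<alpha> - 1) * ln x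
      + ln (F t ^ (n - 1)) + (ln (t * f t) / ln t - 1) * (ln a + l / \<alpha> * ln x)" .
  show ?thesis
    unfolding ln_g using \<open>l > 0\<close> \<open>\<alpha> > 0\<close> \<open>t > 1\<close> by (simp add: field_simps flip: a_def l_def)
qed

lemma uniform_limit_ln_g_seq:
  fixes F f :: "real \<Rightarrow> real" and \<alpha> M :: real
  assumes "\<alpha> > 0"
    and a_top: "filterlim (a_seq F) at_top sequentially"
    and a_growth: "((\<lambda>n. ln (a_seq F n) / ln n) \<longlongrightarrow> 1 / \<alpha>) sequentially"
    and density: "((\<lambda>t. ln (t * f t) / ln t) \<longlongrightarrow> - \<alpha>) at_top"
    and f_nonneg: "\<And>t. 0 \<le> f t"
    and F_bounds: "\<And>n t. n \<ge> 2 \<Longrightarrow> a_seq F n \<le> t \<Longrightarrow> 1 - 1 / n \<le> F t \<and> F t \<le> 1"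
  shows "uniform_limit {1..M} (\<lambda>n x. ln (g_seq F f \<alpha> n x) / ln n) (\<lambda>x. - ln x) sequentially"
proof -
  define \<kappa> where "\<kappa> n = ln (a_seq F n) / ln n" for n :: nat
  define q where "q t = ln (t * f t) / ln t" for t
  \<comment> \<open>As \<open>ln 0 = 0\<close>, a zero of \<open>f\<close> would make the quotient \<open>0\<close>, far from \<open>- \<alpha>\<close>.\<close>
  have "\<forall>\<^sub>F t in at_top. f t > 0"
    using order_tendstoD(2)[OF density, of 0] \<open>\<alpha> > 0\<close>
    by (auto elim!: eventually_mono simp: order_less_le f_nonneg)
  then obtain T where f_pos: "\<And>t. t \<ge> T \<Longrightarrow> f t > 0" by (auto simp: eventually_at_top_linorder)
  have t_ge: "\<forall>\<^sub>F n in sequentially. \<forall>x\<in>{1..M}. a_seq F n \<le> t_seq F \<alpha> n x"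
    using a_top[unfolded filterlim_at_top, rule_format, of 0]
    by eventually_elim (use \<open>\<alpha> > 0\<close> a_seq_le_t_seq in auto)
  with eventually_ge_at_top[of 2] a_top[unfolded filterlim_at_top, rule_format, of "max T 2"]
  have split: "\<forall>\<^sub>F n in sequentially. \<forall>x\<in>{1..M}. ln (g_seq F f \<alpha> n x) / ln n =
      1 + \<kappa> n + (ln \<alpha> - ln (ln n)) / ln n + ln x * (1 / \<alpha> - 1 / ln n)
      + ln (F (t_seq F \<alpha> n x) ^ (n - 1)) / ln n + (q (t_seq F \<alpha> n x) - 1) * (\<kappa> n + ln x / \<alpha>)"
  proof eventually_elim
    case (elim n)
    have "1 / real n \<le> 1 / 2" using elim(1) by (simp add: divide_simps)
    have "F (t_seq F \<alpha> n x) > 0 \<and> f (t_seq F \<alpha> n x) > 0" if "x \<in> {1..M}" for x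
    proof -
      have "a_seq F n \<le> t_seq F \<alpha> n x" using elim(3) that by blast
      then show ?thesis
        using F_bounds[OF elim(1)] f_pos elim(2) \<open>1 / real n \<le> 1 / 2\<close> by fastforce
    qed
    with elim \<open>\<alpha> > 0\<close> show ?case by (auto simp: ln_g_seq_div_ln \<kappa>_def q_def)
  qed
  have bounded: "bounded (h ` {1..M})" if "continuous_on {1..M} h" for h :: "real \<Rightarrow> real"
    using that by (intro compact_imp_bounded compact_continuous_image) auto
  have "uniform_limit {1..M} (\<lambda>n x. q (t_seq F \<alpha> n x) - 1) (\<lambda>_. - \<alpha> - 1) sequentially"
    using uniform_limit_compose_at_top[OF density[folded q_def] a_top t_ge]
    by (intro uniform_limit_minus uniform_limit_const)
  moreover have \<kappa>_lim: "uniform_limit {1..M} (\<lambda>n _. \<kappa> n) (\<lambda>_. 1 / \<alpha>) sequentially"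
    using a_growth unfolding \<kappa>_def by (rule tendsto_imp_uniform_limit)
  ultimately have "uniform_limit {1..M} (\<lambda>n x. (q (t_seq F \<alpha> n x) - 1) * (\<kappa> n + ln x / \<alpha>))
      (\<lambda>x. (- \<alpha> - 1) * (1 / \<alpha> + ln x / \<alpha>)) sequentially"
    by (intro uniform_lim_mult uniform_limit_add uniform_limit_const bounded continuous_intros)
      (use \<open>\<alpha> > 0\<close> in auto)
  moreover have "uniform_limit {1..M} (\<lambda>n _. (ln \<alpha> - ln (ln n)) / ln n) (\<lambda>_. 0) sequentially"
    by (intro tendsto_imp_uniform_limit) real_asymp
  moreover have "uniform_limit {1..M} (\<lambda>n x. ln x * (1 / \<alpha> - 1 / ln n)) (\<lambda>x. ln x * (1 / \<alpha>)) sequentially"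
  proof -
    have "((\<lambda>n::nat. 1 / \<alpha> - 1 / ln n) \<longlongrightarrow> 1 / \<alpha>) sequentially" by real_asymp
    then show ?thesis
      by (intro uniform_lim_mult uniform_limit_const tendsto_imp_uniform_limit bounded continuous_intros) auto
  qed
  moreover have "uniform_limit {1..M} (\<lambda>n x. ln (F (t_seq F \<alpha> n x) ^ (n - 1)) / ln n) (\<lambda>_. 0) sequentially"
  proof (rule uniform_limit_ln_power_pred_div_ln)
    show "\<forall>\<^sub>F n in sequentially. \<forall>x\<in>{1..M}. 1 - 1 / n \<le> F (t_seq F \<alpha> n x) \<and> F (t_seq F \<alpha> n x) \<le> 1"
      using t_ge eventually_ge_at_top[of 2] by eventually_elim (use F_bounds in blast)
  qed
  ultimately have "uniform_limit {1..M} (\<lambda>n x. 1 + \<kappa> n + (ln \<alpha> - ln (ln n)) / ln n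
      + ln x * (1 / \<alpha> - 1 / ln n) + ln (F (t_seq F \<alpha> n x) ^ (n - 1)) / ln n
      + (q (t_seq F \<alpha> n x) - 1) * (\<kappa> n + ln x / \<alpha>))
    (\<lambda>x. 1 + 1 / \<alpha> + 0 + ln x * (1 / \<alpha>) + 0 + (- \<alpha> - 1) * (1 / \<alpha> + ln x / \<alpha>)) sequentially"
    using \<kappa>_lim by (intro uniform_limit_add uniform_limit_const)
  then show ?thesis
    using \<open>\<alpha> > 0\<close> by (subst uniform_limit_cong[OF split]) (auto simp: field_simps)
qed

context real_distribution
begin

lemma bdd_below_cdf_ge: "0 < u \<Longrightarrow> bdd_below {x. u \<le> cdf M x}"
proof -
  assume "0 < u"
  then obtain b where "\<And>x. x \<le> b \<Longrightarrow> cdf M x < u"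
    using order_tendstoD(2)[OF cdf_lim_at_bot] by (auto simp: eventually_at_bot_linorder)
  then show ?thesis by (intro bdd_belowI[of _ b]) (meson linorder_not_less nle_le mem_Collect_eq)
qed

lemma cdf_ge_nonempty: "u < 1 \<Longrightarrow> {x. u \<le> cdf M x} \<noteq> {}"
  using order_tendstoD(1)[OF cdf_lim_at_top_prob] by (metis (mono_tags) eventually_at_top_linorder
    empty_Collect_eq less_imp_le order_refl)

lemma cdf_less_of_less_left_inv:
  assumes "0 < u" and "y < left_inv (cdf M) u"
  shows "cdf M y < u"
  using assms cInf_lower[OF _ bdd_below_cdf_ge[OF \<open>0 < u\<close>], of y]
  unfolding left_inv_def by force

lemma cdf_left_inv_ge:
  assumes "0 < u" and "u < 1"
  shows "u \<le> cdf M (left_inv (cdf M) u)"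
proof (rule tendsto_lowerbound)
  show "(cdf M \<longlongrightarrow> cdf M (left_inv (cdf M) u)) (at_right (left_inv (cdf M) u))"
    using cdf_is_right_cont by (simp add: continuous_within)
  show "\<forall>\<^sub>F y in at_right (left_inv (cdf M) u). u \<le> cdf M y"
  proof (rule eventually_at_rightI)
    fix y assume "y \<in> {left_inv (cdf M) u<..<left_inv (cdf M) u + 1}"
    then have "Inf {x. u \<le> cdf M x} < y" by (simp add: left_inv_def)
    then obtain z where "u \<le> cdf M z" "z < y"
      using cInf_less_iff[OF cdf_ge_nonempty[OF \<open>u < 1\<close>] bdd_below_cdf_ge[OF \<open>0 < u\<close>]] by auto
    then show "u \<le> cdf M y" using cdf_nondecreasing[of z y] by simp
  qed simp
qed simp

lemma cdf_a_seq_ge: "n \<ge> 2 \<Longrightarrow> 1 - 1 / n \<le> cdf M (a_seq (cdf M) n)"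
  unfolding a_seq_def by (intro cdf_left_inv_ge) (auto simp: field_simps)

lemma filterlim_a_seq_cdf_at_top:
  assumes "\<And>x. cdf M x < 1"
  shows "filterlim (a_seq (cdf M)) at_top sequentially"
  unfolding filterlim_at_top
proof
  fix Z
  have "((\<lambda>n. 1 - 1 / real n) \<longlongrightarrow> 1) sequentially" by real_asymp
  from order_tendstoD(1)[OF this assms[of Z]] eventually_ge_at_top[of 2]
  show "\<forall>\<^sub>F n in sequentially. Z \<le> a_seq (cdf M) n"
  proof eventually_elim
    case (elim n)
    show ?case
    proof (rule ccontr)
      assume "\<not> Z \<le> a_seq (cdf M) n"
      then have "1 - 1 / n \<le> cdf M Z"
        using cdf_a_seq_ge[OF elim(2)] cdf_nondecreasing[of "a_seq (cdf M) n" Z] by simp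
      with elim(1) show False by simp
    qed
  qed
qed

lemma cdf_increment_density_bounds:
  assumes M: "M = density lborel f" and f: "f \<in> borel_measurable borel" "\<And>x. 0 \<le> f x"
    and f_antimono: "\<And>x y. x1 \<le> x \<Longrightarrow> x \<le> y \<Longrightarrow> f y \<le> f x"
    and "x1 \<le> a" "a \<le> b"
  shows "(b - a) * f b \<le> cdf M b - cdf M a \<and> cdf M b - cdf M a \<le> (b - a) * f a"
proof (cases "a = b")
  case False
  then have "a < b" using \<open>a \<le> b\<close> by simp
  have const_integral: "(\<integral>\<^sup>+ x. ennreal (f c) * indicator {a<..b} x \<partial>lborel) = ennreal ((b - a) * f c)" for c
    using \<open>a < b\<close> f(2)[of c] by (simp add: nn_integral_cmult_indicator ennreal_mult' mult.commute)
  have "emeasure M {a<..b} = (\<integral>\<^sup>+ x. ennreal (f x) * indicator {a<..b} x \<partial>lborel)"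
    using f(1) by (simp add: M emeasure_density)
  then have "ennreal (cdf M b - cdf M a) = (\<integral>\<^sup>+ x. ennreal (f x) * indicator {a<..b} x \<partial>lborel)"
    using cdf_diff_eq[OF \<open>a < b\<close>] by (simp add: emeasure_eq_measure)
  moreover have "(\<integral>\<^sup>+ x. ennreal (f b) * indicator {a<..b} x \<partial>lborel) \<le> (\<integral>\<^sup>+ x. ennreal (f x) * indicator {a<..b} x \<partial>lborel)"
    and "(\<integral>\<^sup>+ x. ennreal (f x) * indicator {a<..b} x \<partial>lborel) \<le> (\<integral>\<^sup>+ x. ennreal (f a) * indicator {a<..b} x \<partial>lborel)"
    using \<open>x1 \<le> a\<close> by (auto intro!: nn_integral_mono ennreal_leI f_antimono split: split_indicator)
  ultimately have "ennreal ((b - a) * f b) \<le> ennreal (cdf M b - cdf M a)"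
    and "ennreal (cdf M b - cdf M a) \<le> ennreal ((b - a) * f a)"
    by (simp_all add: const_integral)
  then show ?thesis
    using \<open>a < b\<close> f(2)[of a] cdf_nondecreasing[of a b] by (simp add: ennreal_le_iff)
qed simp

lemma uniform_limit_ln_g_seq_cdf:
  fixes \<alpha> x0 x1 K :: real and L f :: "real \<Rightarrow> real"
  assumes "\<alpha> > 0" and L: "slowly_varying L"
    and tail: "\<And>t. t > x0 \<Longrightarrow> 1 - cdf M t = t powr - \<alpha> * L t"
    and density: "M = density lborel f" and f: "f \<in> borel_measurable borel" "\<And>x. 0 \<le> f x"
    and f_antimono: "\<And>x y. x1 \<le> x \<Longrightarrow> x \<le> y \<Longrightarrow> f y \<le> f x"
  shows "uniform_limit {1..K} (\<lambda>n x. ln (g_seq (cdf M) f \<alpha> n x) / ln n) (\<lambda>x. - ln x) sequentially"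
proof -
  define S where "S t = 1 - cdf M t" for t
  have "antimono S" by (auto simp: S_def antimono_def cdf_nondecreasing)
  have S_pos: "S t > 0" if "t > max x0 0" for t
    using tail[of t] L that by (simp add: S_def slowly_varying_def)
  then have S_pos_ev: "\<forall>\<^sub>F t in at_top. S t > 0"
    using eventually_gt_at_top[of "max x0 0"] by (auto elim: eventually_mono)
  have ratio: "((\<lambda>t. S (2 * t) / S t) \<longlongrightarrow> 2 powr - \<alpha>) at_top"
    using tail by (intro tendsto_ratio_of_slowly_varying[OF L]) (auto simp: S_def)
  have increment: "(b - a) * f b \<le> S a - S b \<and> S a - S b \<le> (b - a) * f a" if "x1 \<le> a" "a \<le> b" for a b
    using cdf_increment_density_bounds[OF density f f_antimono that] by (simp add: S_def)
  have "cdf M x < 1" for x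
  proof -
    have "S (max x (max x0 0 + 1)) > 0" by (rule S_pos) auto
    then show ?thesis using cdf_nondecreasing[of x "max x (max x0 0 + 1)"] by (simp add: S_def)
  qed
  then have a_top: "filterlim (a_seq (cdf M)) at_top sequentially"
    by (rule filterlim_a_seq_cdf_at_top)
  have F_bounds: "1 - 1 / n \<le> cdf M t \<and> cdf M t \<le> 1" if "n \<ge> 2" "a_seq (cdf M) n \<le> t" for n t
    using cdf_a_seq_ge[OF that(1)] cdf_nondecreasing[OF that(2)] cdf_bounded_prob[of t] by linarith
  have "\<forall>\<^sub>F n in sequentially. S (a_seq (cdf M) n) \<le> 1 / n \<and> 1 / n \<le> S (a_seq (cdf M) n / 2)"
    using eventually_ge_at_top[of 2] a_top[unfolded filterlim_at_top, rule_format, of 1]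
  proof eventually_elim
    case (elim n)
    then have "cdf M (a_seq (cdf M) n / 2) < 1 - 1 / n"
      by (intro cdf_less_of_less_left_inv[of "1 - 1 / n", folded a_seq_def]) (auto simp: field_simps)
    then show ?case using F_bounds[OF elim(1) order_refl] by (simp add: S_def)
  qed
  then have "((\<lambda>n. ln (a_seq (cdf M) n) / ln n) \<longlongrightarrow> 1 / \<alpha>) sequentially"
    by (intro tendsto_ln_quantile_div_ln[OF tendsto_ln_div_ln_of_doubling_ratio[OF \<open>antimono S\<close> S_pos_ev ratio]
        \<open>\<alpha> > 0\<close> a_top S_pos_ev])
  moreover have "((\<lambda>t. ln (t * f t) / ln t) \<longlongrightarrow> - \<alpha>) at_top"
    by (rule tendsto_ln_density_div_ln[OF \<open>antimono S\<close> S_pos_ev ratio \<open>\<alpha> > 0\<close> increment])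
  ultimately show ?thesis
    using f(2) F_bounds by (rule uniform_limit_ln_g_seq[OF \<open>\<alpha> > 0\<close> a_top])
qed

end

theorem mainTheorem4:
  fixes P :: "'a measure" and X :: "nat \<Rightarrow> 'a \<Rightarrow> real"
    and F f L :: "real \<Rightarrow> real" and \<alpha> x0 x1 M :: real
  assumes "prob_space P"
    and rv: "\<And>n. X n \<in> borel_measurable P"
    and indep: "prob_space.indep_vars P (\<lambda>_. borel) X UNIV"
    and ident: "\<And>n. distr P borel (X n) = distr P borel (X 0)"
    and F_def: "\<And>x. F x = measure P {\<omega> \<in> space P. X 0 \<omega> \<le> x}"
    and x0: "x0 > 0" and \<alpha>: "\<alpha> > 0" and L: "slowly_varying L"
    and tail: "\<And>x. x > x0 \<Longrightarrow> measure P {\<omega> \<in> space P. X 0 \<omega> > x} = x powr (- \<alpha>) * L x"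
    and f_meas: "f \<in> borel_measurable borel"
    and f_nonneg: "\<And>x. f x \<ge> 0"
    and density: "distr P borel (X 0) = density lborel (\<lambda>x. ennreal (f x))"
    and f_mono: "\<And>x y. x1 \<le> x \<Longrightarrow> x \<le> y \<Longrightarrow> f y \<le> f x"
    and M: "M > 1"
  shows "uniform_limit {1..M} (\<lambda>n x. ln (g_seq F f \<alpha> n x) / ln (real n)) (\<lambda>x. - ln x) sequentially"
proof -
  \<comment> \<open>Independence and identical distribution are what make \<open>g_n\<close> the density of \<open>Z_n\<close>;
    the limit itself only involves the law of \<open>X 0\<close>.\<close>
  interpret P: prob_space P by fact
  define D where "D = distr P borel (X 0)"
  interpret D: real_distribution D unfolding D_def using rv by (rule P.real_distribution_distr)
  have F_cdf: "F = cdf D"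
    using rv by (auto simp: F_def D_def cdf_def measure_distr vimage_def Int_def conj_commute)
  have "1 - cdf D t = t powr - \<alpha> * L t" if "t > x0" for t
  proof -
    have "{\<omega> \<in> space P. X 0 \<omega> > t} = space P - {\<omega> \<in> space P. X 0 \<omega> \<le> t}" by auto
    moreover have "{\<omega> \<in> space P. X 0 \<omega> \<le> t} \<in> P.events" using rv by measurable
    ultimately show ?thesis using tail[OF that] by (simp add: P.prob_compl F_def flip: F_cdf)
  qed
  from D.uniform_limit_ln_g_seq_cdf[OF \<alpha> L this density[folded D_def] f_meas f_nonneg f_mono]
  show ?thesis by (simp add: F_cdf)
qed

end
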